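(* Let $(S,\Delta,\mathbb{P})$ be a probability space, $(U,d)$ a separable metric space, $\mathfrak{X}$ the set of $U$-valued random variables on $S$, $\mathcal{I}$ an ideal on $\mathbb{N}$, and $\underline{X}=\{X_n\}$, $\underline{Y}=\{Y_n\}$ sequences in $\mathfrak{X}$ that are $\mathcal{I}$-almost surely equal, i.e. $\{n\in\mathbb{N}:\mathbb{P}(X_n=Y_n)=1\}\in\mathcal{F}(\mathcal{I})$. Then for every $r\geq 0$: $\Lambda^{r}_{\underline{X}}(\mathcal{I}^{\mathbb{P}})=\Lambda^{r}_{\underline{Y}}(\mathcal{I}^{\mathbb{P}})$, $\Gamma^{r^s}_{\underline{X}}(\mathcal{I}^{\mathbb{P}})=\Gamma^{r^s}_{\underline{Y}}(\mathcal{I}^{\mathbb{P}})$, and $\Gamma^{r^w}_{\underline{X}}(\mathcal{I}^{\mathbb{P}})=\Gamma^{r^w}_{\underline{Y}}(\mathcal{I}^{\mathbb{P}})$.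
   Context: An ideal on $\mathbb{N}$ is a family $\mathcal{I}\subseteq\mathcal{P}(\mathbb{N})$ with $\varnothing\in\mathcal{I}$, closed under finite unions and under subsets; $\mathcal{F}(\mathcal{I})=\{A\subseteq\mathbb{N}:\mathbb{N}\setminus A\in\mathcal{I}\}$. For a sequence $\underline{X}=\{X_n\}$ in $\mathfrak{X}$ and $r\geq0$: $\Lambda^{r}_{\underline{X}}(\mathcal{I}^{\mathbb{P}})$ is the set of $Y\in\mathfrak{X}$ for which there is $A\subseteq\mathbb{N}$, $A\notin\mathcal{I}$, with $\lim_{n\in A}\mathbb{P}(d(X_n,Y)\geq r+\varepsilon)=0$ for every $\varepsilon>0$ (limit along $A$ in increasing order); $\Gamma^{r^s}_{\underline{X}}(\mathcal{I}^{\mathbb{P}})$ is the set of $Y\in\mathfrak{X}$ with $\{n:\mathbb{P}(d(X_n,Y)<r+\varepsilon)>1-\delta\}\notin\mathcal{I}$ for all $\varepsilon,\delta>0$; $\Gamma^{r^w}_{\underline{X}}(\mathcal{I}^{\mathbb{P}})$ is the set of $Y\in\mathfrak{X}$ for which there is $\delta_*=\delta_*(Y)>0$ with $\{n:\mathbb{P}(d(X_n,Y)<r+\varepsilon)>\delta_*\}\notin\mathcal{I}$ for every $\varepsilon>0$. *)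

theory Defs
  imports "HOL-Probability.Probability"
begin

definition is_ideal :: "nat set set \<Rightarrow> bool" where
  "is_ideal I \<longleftrightarrow> {} \<in> I \<and> (\<forall>A\<in>I. \<forall>B\<in>I. A \<union> B \<in> I) \<and> (\<forall>A\<in>I. \<forall>B. B \<subseteq> A \<longrightarrow> B \<in> I)"

definition filter_of_ideal :: "nat set set \<Rightarrow> nat set set" where
  "filter_of_ideal I = {A. - A \<in> I}"

definition rvars :: "'s measure \<Rightarrow> ('s \<Rightarrow> 'a::metric_space) set" where
  "rvars M = borel_measurable M"

text \<open>Rough I-limit points in probability: limit along A in increasing order,
rendered as the limit along the filter sequentially restricted to A.\<close>
definition Lambda_set ::
  "'s measure \<Rightarrow> nat set set \<Rightarrow> real \<Rightarrow> (nat \<Rightarrow> 's \<Rightarrow> 'a::metric_space) \<Rightarrow> ('s \<Rightarrow> 'a) set" where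
  "Lambda_set M I r X = {Y \<in> rvars M. \<exists>A. A \<notin> I \<and>
     (\<forall>\<epsilon>>0. ((\<lambda>n. measure M {s \<in> space M. dist (X n s) (Y s) \<ge> r + \<epsilon>}) \<longlongrightarrow> 0)
              (sequentially \<sqinter> principal A))}"

definition Gamma_s_set ::
  "'s measure \<Rightarrow> nat set set \<Rightarrow> real \<Rightarrow> (nat \<Rightarrow> 's \<Rightarrow> 'a::metric_space) \<Rightarrow> ('s \<Rightarrow> 'a) set" where
  "Gamma_s_set M I r X = {Y \<in> rvars M. \<forall>\<epsilon>>0. \<forall>\<delta>>0.
     {n. measure M {s \<in> space M. dist (X n s) (Y s) < r + \<epsilon>} > 1 - \<delta>} \<notin> I}"

definition Gamma_w_set ::
  "'s measure \<Rightarrow> nat set set \<Rightarrow> real \<Rightarrow> (nat \<Rightarrow> 's \<Rightarrow> 'a::metric_space) \<Rightarrow> ('s \<Rightarrow> 'a) set" where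
  "Gamma_w_set M I r X = {Y \<in> rvars M. \<exists>\<delta>>0. \<forall>\<epsilon>>0.
     {n. measure M {s \<in> space M. dist (X n s) (Y s) < r + \<epsilon>} > \<delta>} \<notin> I}"

end

theory Submission
  imports Defs
begin

text \<open>On every index of the filter set \<open>G = {n. P(X\<^sub>n = Y\<^sub>n) = 1}\<close> the probabilities
\<open>P(d(X\<^sub>n, Z) \<ge> c)\<close> and \<open>P(d(X\<^sub>n, Z) < c)\<close> coincide with those for \<open>Y\<^sub>n\<close>, because
the events differ only on a null set. Membership in \<open>I\<close> is insensitive to changes
off a set of \<open>\<F>(I)\<close>, and a limit along a non-\<open>I\<close> set \<open>A\<close> survives the passage to the
non-\<open>I\<close> set \<open>A \<inter> G\<close>; hence the three sets of rough points coincide.\<close>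

lemma (in prob_space) prob_Collect_cong_almost_surely:
  assumes "prob {s \<in> space M. f s = g s} = 1"
    and "{s \<in> space M. P s (f s)} \<in> events" and "{s \<in> space M. P s (g s)} \<in> events"
  shows "prob {s \<in> space M. P s (f s)} = prob {s \<in> space M. P s (g s)}"
proof (rule prob_eq_AE)
  show "AE s in M. P s (f s) \<longleftrightarrow> P s (g s)"
    using AE_prob_1[OF assms(1)] by (auto elim: AE_mp)
qed (use assms in auto)

lemma ideal_mem_cong_on_filter_set:
  assumes "is_ideal I" and G: "G \<in> filter_of_ideal I"
    and AB: "\<And>n. n \<in> G \<Longrightarrow> n \<in> A \<longleftrightarrow> n \<in> B"
  shows "A \<in> I \<longleftrightarrow> B \<in> I"
proof -
  have "C \<in> I" if "D \<in> I" and "\<And>n. n \<in> G \<Longrightarrow> n \<in> C \<Longrightarrow> n \<in> D" for C D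
  proof -
    have "D \<union> - G \<in> I" using \<open>is_ideal I\<close> \<open>D \<in> I\<close> G
      unfolding is_ideal_def filter_of_ideal_def by blast
    moreover have "C \<subseteq> D \<union> - G" using that(2) by blast
    ultimately show ?thesis using \<open>is_ideal I\<close> unfolding is_ideal_def by blast
  qed
  then show ?thesis using AB by blast
qed

lemma nonideal_tendsto_cong_on_filter_set:
  fixes f g :: "'b \<Rightarrow> nat \<Rightarrow> 'c::topological_space"
  assumes "is_ideal I" and "G \<in> filter_of_ideal I"
    and fg: "\<And>e n. n \<in> G \<Longrightarrow> f e n = g e n"
  shows "(\<exists>A. A \<notin> I \<and> (\<forall>e. Q e \<longrightarrow> (f e \<longlongrightarrow> l e) (F \<sqinter> principal A)))
     \<longleftrightarrow> (\<exists>A. A \<notin> I \<and> (\<forall>e. Q e \<longrightarrow> (g e \<longlongrightarrow> l e) (F \<sqinter> principal A)))"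
proof -
  have transfer: "\<exists>A. A \<notin> I \<and> (\<forall>e. Q e \<longrightarrow> (v e \<longlongrightarrow> l e) (F \<sqinter> principal A))"
    if uv: "\<And>e n. n \<in> G \<Longrightarrow> u e n = v e n"
      and "A \<notin> I" and u: "\<forall>e. Q e \<longrightarrow> (u e \<longlongrightarrow> l e) (F \<sqinter> principal A)"
    for u v :: "'b \<Rightarrow> nat \<Rightarrow> 'c" and A
  proof (intro exI conjI allI impI)
    show "A \<inter> G \<notin> I"
      using \<open>A \<notin> I\<close> ideal_mem_cong_on_filter_set[OF assms(1,2), of "A \<inter> G" A] by blast
    fix e assume "Q e"
    have "(u e \<longlongrightarrow> l e) (F \<sqinter> principal (A \<inter> G))"
      by (rule tendsto_mono[OF _ u[rule_format, OF \<open>Q e\<close>]]) (intro inf_mono order_refl, simp)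
    moreover have "\<forall>\<^sub>F n in F \<sqinter> principal (A \<inter> G). u e n = v e n"
      using uv by (auto simp: eventually_inf_principal)
    ultimately show "(v e \<longlongrightarrow> l e) (F \<sqinter> principal (A \<inter> G))"
      by (rule Lim_transform_eventually)
  qed
  show ?thesis
    using transfer[of f g, OF fg] transfer[of g f, OF fg[symmetric]] by blast
qed

theorem proposition3p7:
  fixes M :: "'s measure" and I :: "nat set set"
    and X Y :: "nat \<Rightarrow> 's \<Rightarrow> 'a::{metric_space, second_countable_topology}"
    and r :: real
  assumes "prob_space M"
    and "is_ideal I"
    and "\<And>n. X n \<in> rvars M"
    and "\<And>n. Y n \<in> rvars M"
    and "{n. measure M {s \<in> space M. X n s = Y n s} = 1} \<in> filter_of_ideal I"
    and "r \<ge> 0"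
  shows "Lambda_set M I r X = Lambda_set M I r Y
       \<and> Gamma_s_set M I r X = Gamma_s_set M I r Y
       \<and> Gamma_w_set M I r X = Gamma_w_set M I r Y"
proof -
  interpret prob_space M by fact
  define G where "G = {n. prob {s \<in> space M. X n s = Y n s} = 1}"
  have G: "G \<in> filter_of_ideal I" using assms(5) by (simp add: G_def)
  have ge: "prob {s \<in> space M. dist (X n s) (Z s) \<ge> c} = prob {s \<in> space M. dist (Y n s) (Z s) \<ge> c}"
    and lt: "prob {s \<in> space M. dist (X n s) (Z s) < c} = prob {s \<in> space M. dist (Y n s) (Z s) < c}"
    if "n \<in> G" and "Z \<in> rvars M" for n Z c
    using that assms(3,4)[of n] unfolding G_def rvars_def
    by (auto intro!: prob_Collect_cong_almost_surely[where P = "\<lambda>s x. dist x (Z s) \<ge> c"]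
                     prob_Collect_cong_almost_surely[where P = "\<lambda>s x. dist x (Z s) < c"])
  have ideal_lt: "{n. prob {s \<in> space M. dist (X n s) (Z s) < c} > t} \<in> I
      \<longleftrightarrow> {n. prob {s \<in> space M. dist (Y n s) (Z s) < c} > t} \<in> I"
    if "Z \<in> rvars M" for Z c t
    by (rule ideal_mem_cong_on_filter_set[OF assms(2) G]) (simp add: lt[OF _ that])
  have "Lambda_set M I r X = Lambda_set M I r Y"
    unfolding Lambda_set_def
    by (intro Collect_cong conj_cong refl nonideal_tendsto_cong_on_filter_set[OF assms(2) G])
      (simp add: ge)
  moreover have "Gamma_s_set M I r X = Gamma_s_set M I r Y"
    unfolding Gamma_s_set_def by (intro Collect_cong conj_cong refl) (simp add: ideal_lt)
  moreover have "Gamma_w_set M I r X = Gamma_w_set M I r Y"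
    unfolding Gamma_w_set_def by (intro Collect_cong conj_cong refl) (simp add: ideal_lt)
  ultimately show ?thesis by blast
qed

end
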